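(* Let two players have additive valuations $v_1,v_2$ on a finite set of goods $M$, normalized so that $v_1(M)=v_2(M)=1$. Assume each has nonzero marginal utility, i.e. $v_i(\{g\})>0$ for every good $g$ and each $i$. Then every leximin solution is both EFX and Pareto optimal.
   Context: A valuation is a function $v:2^M\to\mathbb{R}_{\ge0}$ with $v(\emptyset)=0$ that is monotone: $v(S)\le v(T)$ whenever $S\subseteq T$. It is additive if $v(S)=\sum_{g\in S}v(\{g\})$ for all $S\subseteq M$. An allocation is an ordered partition $(A_1,\dots,A_n)$ of $M$; parts may be empty. It is EFX if for all players $i,j$ and every $g\in A_j$ we have $v_i(A_i)\ge v_i(A_j\setminus\{g\})$. It is Pareto optimal (PO) if there is no allocation $B$ with $v_i(B_i)\ge v_i(A_i)$ for all $i$ and $v_j(B_j)>v_j(A_j)$ for some $j$. For an allocation $A$, consider the multiset of utilities $\{v_i(A_i)\}_i$ sorted in increasing order. The leximin comparison is defined by: $A\prec B$ if and only if the sorted utility vector of $A$ is lexicographically smaller than that of $B$. A leximin solution is an allocation $A$ with no allocation $B$ satisfying $A\prec B$. *)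

theory Defs
  imports "HOL-Analysis.Analysis"
begin

text \<open>Players are indexed by a finite set N of naturals; goods form a finite set M.
  A valuation is v :: 'g set => real, only evaluated on subsets of M.\<close>

definition valuation :: "'g set \<Rightarrow> ('g set \<Rightarrow> real) \<Rightarrow> bool" where
  "valuation M v \<longleftrightarrow> v {} = 0 \<and> (\<forall>S. S \<subseteq> M \<longrightarrow> v S \<ge> 0)
     \<and> (\<forall>S T. S \<subseteq> T \<and> T \<subseteq> M \<longrightarrow> v S \<le> v T)"

definition additive :: "'g set \<Rightarrow> ('g set \<Rightarrow> real) \<Rightarrow> bool" where
  "additive M v \<longleftrightarrow> (\<forall>S. S \<subseteq> M \<longrightarrow> v S = (\<Sum>g\<in>S. v {g}))"

definition allocation :: "nat set \<Rightarrow> 'g set \<Rightarrow> (nat \<Rightarrow> 'g set) \<Rightarrow> bool" where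
  "allocation N M A \<longleftrightarrow> (\<Union>i\<in>N. A i) = M \<and>
     (\<forall>i\<in>N. \<forall>j\<in>N. i \<noteq> j \<longrightarrow> A i \<inter> A j = {})"

definition EFX :: "nat set \<Rightarrow> (nat \<Rightarrow> 'g set \<Rightarrow> real) \<Rightarrow> (nat \<Rightarrow> 'g set) \<Rightarrow> bool" where
  "EFX N v A \<longleftrightarrow> (\<forall>i\<in>N. \<forall>j\<in>N. \<forall>g\<in>A j. v i (A i) \<ge> v i (A j - {g}))"

definition pareto_optimal ::
  "nat set \<Rightarrow> 'g set \<Rightarrow> (nat \<Rightarrow> 'g set \<Rightarrow> real) \<Rightarrow> (nat \<Rightarrow> 'g set) \<Rightarrow> bool" where
  "pareto_optimal N M v A \<longleftrightarrow> allocation N M A \<and>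
     \<not> (\<exists>B. allocation N M B \<and> (\<forall>i\<in>N. v i (B i) \<ge> v i (A i))
             \<and> (\<exists>j\<in>N. v j (B j) > v j (A j)))"

definition utility_vector ::
  "nat set \<Rightarrow> (nat \<Rightarrow> 'g set \<Rightarrow> real) \<Rightarrow> (nat \<Rightarrow> 'g set) \<Rightarrow> real list" where
  "utility_vector N v A = sort (map (\<lambda>i. v i (A i)) (sorted_list_of_set N))"

definition lex_less :: "real list \<Rightarrow> real list \<Rightarrow> bool" where
  "lex_less xs ys \<longleftrightarrow> length xs = length ys \<and>
     (\<exists>k < length xs. take k xs = take k ys \<and> xs ! k < ys ! k)"

definition leximin_less ::
  "nat set \<Rightarrow> (nat \<Rightarrow> 'g set \<Rightarrow> real) \<Rightarrow> (nat \<Rightarrow> 'g set) \<Rightarrow> (nat \<Rightarrow> 'g set) \<Rightarrow> bool" where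
  "leximin_less N v A B \<longleftrightarrow> lex_less (utility_vector N v A) (utility_vector N v B)"

definition leximin_solution ::
  "nat set \<Rightarrow> 'g set \<Rightarrow> (nat \<Rightarrow> 'g set \<Rightarrow> real) \<Rightarrow> (nat \<Rightarrow> 'g set) \<Rightarrow> bool" where
  "leximin_solution N M v A \<longleftrightarrow> allocation N M A \<and>
     \<not> (\<exists>B. allocation N M B \<and> leximin_less N v A B)"

end

theory Submission
  imports Defs
begin

text \<open>With two players the leximin order compares the minimum utility first and then the
  maximum. A Pareto improvement cannot lower either, so it is a leximin improvement. For EFX,
  suppose player i with bundle P envies Q - {g}. Then u(P) < 1/2, and moving g from Q to P
  gives a partition into P + g and Q - g which the envious player strictly prefers to P on
  either side; since the other player values the two parts at 1 in total, one of them is worth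
  more than u(P) to her as well. Handing her that part yields an allocation whose minimum
  utility exceeds u(P), which is at least the leximin minimum.\<close>

lemma allocation_two_iff:
  "allocation {1, 2} M B \<longleftrightarrow> B 1 \<union> B 2 = M \<and> B 1 \<inter> B 2 = {}"
  unfolding allocation_def by auto

lemma utility_vector_two:
  "utility_vector {1, 2} v A =
     [min (v 1 (A 1)) (v 2 (A 2)), max (v 1 (A 1)) (v 2 (A 2))]"
  unfolding utility_vector_def by (simp add: min_def max_def)

lemma lex_less_two_fst: "a < c \<Longrightarrow> lex_less [a, b] [c, d]"
  unfolding lex_less_def by (intro conjI exI[of _ 0]) auto

lemma lex_less_two_snd: "a = c \<Longrightarrow> b < d \<Longrightarrow> lex_less [a, b] [c, d]"
  unfolding lex_less_def by (intro conjI exI[of _ 1]) auto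

lemma leximin_two_min_maximal:
  assumes "leximin_solution {1, 2} M v A" and "X \<union> Y = M" and "X \<inter> Y = {}"
  shows "min (v 1 X) (v 2 Y) \<le> min (v 1 (A 1)) (v 2 (A 2))"
proof (rule ccontr)
  assume better: "\<not> ?thesis"
  define B :: "nat \<Rightarrow> _" where "B = (\<lambda>i. if i = 1 then X else Y)"
  have "allocation {1, 2} M B"
    using assms(2,3) unfolding B_def allocation_two_iff by auto
  moreover have "leximin_less {1, 2} v A B"
    using better unfolding leximin_less_def utility_vector_two B_def
    by (intro lex_less_two_fst) (auto simp: not_le min_less_iff_disj)
  ultimately show False
    using assms(1) unfolding leximin_solution_def by blast
qed

lemma leximin_two_pareto_optimal:
  assumes "leximin_solution {1, 2} M v A"
  shows "pareto_optimal {1, 2} M v A"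
  unfolding pareto_optimal_def
proof (intro conjI notI)
  show "allocation {1, 2} M A"
    using assms unfolding leximin_solution_def by blast
next
  assume "\<exists>B. allocation {1, 2} M B \<and> (\<forall>i\<in>{1, 2}. v i (A i) \<le> v i (B i))
            \<and> (\<exists>j\<in>{1, 2}. v j (A j) < v j (B j))"
  then obtain B where B: "allocation {1, 2} M B"
    and ge: "v 1 (A 1) \<le> v 1 (B 1)" "v 2 (A 2) \<le> v 2 (B 2)"
    and gt: "v 1 (A 1) < v 1 (B 1) \<or> v 2 (A 2) < v 2 (B 2)"
    by auto
  have "lex_less [min (v 1 (A 1)) (v 2 (A 2)), max (v 1 (A 1)) (v 2 (A 2))]
                 [min (v 1 (B 1)) (v 2 (B 2)), max (v 1 (B 1)) (v 2 (B 2))]"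
  proof (cases "min (v 1 (A 1)) (v 2 (A 2)) < min (v 1 (B 1)) (v 2 (B 2))")
    case True
    then show ?thesis by (rule lex_less_two_fst)
  next
    case False
    then have min_eq: "min (v 1 (A 1)) (v 2 (A 2)) = min (v 1 (B 1)) (v 2 (B 2))"
      using ge by linarith
    moreover have "max (v 1 (A 1)) (v 2 (A 2)) < max (v 1 (B 1)) (v 2 (B 2))"
      using ge gt min_eq by (auto simp: min_def max_def split: if_splits)
    ultimately show ?thesis by (rule lex_less_two_snd)
  qed
  then show False
    using assms B unfolding leximin_solution_def leximin_less_def utility_vector_two by blast
qed

lemma additive_union:
  assumes "finite M" "additive M u" "S \<subseteq> M" "T \<subseteq> M" "S \<inter> T = {}"
  shows "u (S \<union> T) = u S + u T"
proof -
  have "finite S" "finite T"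
    using assms by (auto intro: finite_subset)
  then show ?thesis
    using assms unfolding additive_def by (simp add: sum.union_disjoint)
qed

lemma envy_yields_better_split:
  assumes fin: "finite M" and add_u: "additive M u" and add_w: "additive M w"
    and uM: "u M = 1" and wM: "w M = 1" and pos: "\<And>h. h \<in> M \<Longrightarrow> u {h} > 0"
    and part: "P \<union> Q = M" "P \<inter> Q = {}" and g: "g \<in> Q"
    and envy: "u P < u (Q - {g})"
  shows "\<exists>X Y. X \<union> Y = M \<and> X \<inter> Y = {} \<and> u X > u P \<and> w Y > u P"
proof -
  have gM: "g \<in> M" using part g by auto
  have split_g: "(P \<union> {g}) \<union> (Q - {g}) = M" "(P \<union> {g}) \<inter> (Q - {g}) = {}"
    using part g by auto
  have "u Q = u (Q - {g}) + u {g}"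
    using additive_union[OF fin add_u, of "Q - {g}" "{g}"] part g insert_Diff[OF g]
    by auto
  moreover have "u P + u Q = 1"
    using additive_union[OF fin add_u, of P Q] part uM by auto
  ultimately have less_half: "u P < 1/2"
    using envy pos[OF gM] by linarith
  have "g \<notin> P" using part g by blast
  then have gain: "u (P \<union> {g}) > u P"
    using additive_union[OF fin add_u, of P "{g}"] part gM pos[OF gM] by auto
  have w_sum: "w (P \<union> {g}) + w (Q - {g}) = 1"
    using additive_union[OF fin add_w, of "P \<union> {g}" "Q - {g}"] split_g wM by auto
  show ?thesis
  proof (cases "w (Q - {g}) > u P")
    case True
    then show ?thesis
      using split_g gain by blast
  next
    case False
    then have "w (P \<union> {g}) > u P"
      using w_sum less_half by linarith
    then show ?thesis
      using split_g envy by (metis Int_commute Un_commute)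
  qed
qed

lemma leximin_two_EFX:
  assumes fin: "finite M"
    and val: "\<And>i. i \<in> {1, 2} \<Longrightarrow> valuation M (v i)"
    and add: "\<And>i. i \<in> {1, 2} \<Longrightarrow> additive M (v i)"
    and norm: "\<And>i. i \<in> {1, 2} \<Longrightarrow> v i M = 1"
    and pos: "\<And>i g. i \<in> {1, 2} \<Longrightarrow> g \<in> M \<Longrightarrow> v i {g} > 0"
    and lex: "leximin_solution {1, 2} M v A"
  shows "EFX {1, 2} v A"
  unfolding EFX_def
proof (intro ballI)
  fix i j g assume i: "i \<in> {1, 2 :: nat}" and j: "j \<in> {1, 2 :: nat}" and g: "g \<in> A j"
  have part: "A 1 \<union> A 2 = M" "A 1 \<inter> A 2 = {}"
    using lex unfolding leximin_solution_def allocation_two_iff by auto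
  let ?m = "min (v 1 (A 1)) (v 2 (A 2))"
  show "v i (A j - {g}) \<le> v i (A i)"
  proof (rule ccontr)
    assume envy: "\<not> ?thesis"
    consider "i = j" | "i = 1" "j = 2" | "i = 2" "j = 1"
      using i j by auto
    then show False
    proof cases
      case 1
      then show False
        using envy val[OF i] part i unfolding valuation_def by blast
    next
      case 2
      obtain X Y where "X \<union> Y = M" "X \<inter> Y = {}" "v 1 X > v 1 (A 1)" "v 2 Y > v 1 (A 1)"
        using envy_yields_better_split[OF fin add[of 1] add[of 2] norm[of 1] norm[of 2]
            pos[of 1] part, of g] g envy 2 by auto
      then show False
        using leximin_two_min_maximal[OF lex, of X Y] by linarith
    next
      case 3
      obtain X Y where "X \<union> Y = M" "X \<inter> Y = {}" "v 2 X > v 2 (A 2)" "v 1 Y > v 2 (A 2)"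
        using envy_yields_better_split[OF fin add[of 2] add[of 1] norm[of 2] norm[of 1]
            pos[of 2], of "A 2" "A 1" g] part g envy 3 by auto
      then show False
        using leximin_two_min_maximal[OF lex, of Y X] by (auto simp: Int_commute Un_commute)
    qed
  qed
qed

theorem theorem5p5:
  fixes M :: "'g set" and v :: "nat \<Rightarrow> 'g set \<Rightarrow> real" and A :: "nat \<Rightarrow> 'g set"
  assumes "finite M"
    and "\<And>i. i \<in> {1, 2} \<Longrightarrow> valuation M (v i)"
    and "\<And>i. i \<in> {1, 2} \<Longrightarrow> additive M (v i)"
    and "\<And>i. i \<in> {1, 2} \<Longrightarrow> v i M = 1"
    and "\<And>i g. i \<in> {1, 2} \<Longrightarrow> g \<in> M \<Longrightarrow> v i {g} > 0"
    and "leximin_solution {1, 2} M v A"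
  shows "EFX {1, 2} v A \<and> pareto_optimal {1, 2} M v A"
  using leximin_two_EFX[OF assms] leximin_two_pareto_optimal[OF assms(6)] by blast

end
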